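(* Let $t_1,\dots,t_n$ be indeterminates and let $C$ be the $n\times n$ matrix with $C_{ii}=0$ and $C_{ij}=\frac{1}{t_i-t_j}$ for $i\ne j$. Then $$\det C=\sum_\pi\prod_{i<j,\ \pi(i)=j}\frac{1}{(t_i-t_j)^2},$$ where the sum is over all perfect matchings $\pi$ of $\{1,\dots,n\}$, i.e. fixed-point-free involutions of $\{1,\dots,n\}$ (the empty sum being $0$ when $n$ is odd). *)

theory Defs
  imports "Jordan_Normal_Form.Determinant" "HOL-Combinatorics.Permutations"
begin

definition cauchy_like_mat :: "nat \<Rightarrow> (nat \<Rightarrow> 'a::field) \<Rightarrow> 'a mat" where
  "cauchy_like_mat n t = mat n n (\<lambda>(i, j). if i = j then 0 else 1 / (t i - t j))"

definition perfect_matchings :: "nat \<Rightarrow> (nat \<Rightarrow> nat) set" where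
  "perfect_matchings n = {\<pi>. \<pi> permutes {..<n} \<and> (\<forall>i<n. \<pi> i \<noteq> i \<and> \<pi> (\<pi> i) = i)}"

end

theory Submission
  imports Defs
begin

text \<open>
  Write \<open>D(S)\<close> for the determinant of the principal minor of \<open>C\<close> indexed by \<open>S\<close> and fix
  \<open>a \<in> S\<close>. Expanding along column \<open>a\<close>, the permutation \<open>\<sigma>\<close> with \<open>\<sigma> c = a\<close> is written as
  \<open>\<tau> \<circ> (a c)\<close> with \<open>\<tau>\<close> a permutation of \<open>S - {a}\<close>. When \<open>\<tau> c = b \<noteq> c\<close>, the partial fraction
  identity \<open>C a b C c a = C c b (C a b - C a c)\<close> rewrites the term as that of \<open>\<tau>\<close> itself times
  \<open>C a (\<tau> c) - C a c\<close>, and these factors sum to zero over \<open>c\<close> since \<open>\<tau>\<close> permutes \<open>S - {a}\<close>.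
  Only the terms with \<open>\<tau> c = c\<close> survive, giving
  \<open>D(S) = (\<Sum>c\<in>S - {a}. D(S - {a, c}) / (t a - t c)\<^sup>2)\<close>.
  The sum over perfect matchings obeys the same recursion (classify by the partner of \<open>a\<close>),
  and both are 1 for \<open>S = {}\<close>.
\<close>

definition skew_cauchy :: "('i \<Rightarrow> 'a::field) \<Rightarrow> 'i \<Rightarrow> 'i \<Rightarrow> 'a" where
  "skew_cauchy t i j = (if i = j then 0 else 1 / (t i - t j))"

definition det_on :: "'i set \<Rightarrow> ('i \<Rightarrow> 'i \<Rightarrow> 'a::comm_ring_1) \<Rightarrow> 'a" where
  "det_on S A = (\<Sum>\<sigma> | \<sigma> permutes S. of_int (sign \<sigma>) * (\<Prod>i\<in>S. A i (\<sigma> i)))"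

lemma permutes_Diff_singleton_iff: "p permutes S - {c} \<longleftrightarrow> p permutes S \<and> p c = c"
proof
  assume "p permutes S - {c}"
  then show "p permutes S \<and> p c = c"
    using permutes_subset[of p "S - {c}" S] permutes_not_in by fastforce
next
  assume "p permutes S \<and> p c = c"
  then show "p permutes S - {c}"
    by (auto intro: permutes_superset)
qed

lemma sign_comp_transpose:
  assumes "permutation p" and "a \<noteq> c"
  shows "sign (p \<circ> transpose a c) = - sign p"
  using assms by (simp add: sign_compose permutation_swap_id sign_swap_id)

lemma sum_permutes_mapsto_conv_transpose:
  assumes "a \<in> S" and "c \<in> S"
  shows "(\<Sum>\<sigma> | \<sigma> permutes S \<and> \<sigma> c = a. g \<sigma>) = (\<Sum>\<tau> | \<tau> permutes S - {a}. g (\<tau> \<circ> transpose a c))"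
proof (rule sum.reindex_bij_witness[where i = "\<lambda>\<tau>. \<tau> \<circ> transpose a c" and j = "\<lambda>\<sigma>. \<sigma> \<circ> transpose a c"])
  fix \<sigma> assume "\<sigma> \<in> {\<sigma>. \<sigma> permutes S \<and> \<sigma> c = a}"
  then show "\<sigma> \<circ> transpose a c \<in> {\<tau>. \<tau> permutes S - {a}}"
    using permutes_swap_id[OF assms] by (simp add: permutes_Diff_singleton_iff permutes_compose)
next
  fix \<tau> assume "\<tau> \<in> {\<tau>. \<tau> permutes S - {a}}"
  then show "\<tau> \<circ> transpose a c \<in> {\<sigma>. \<sigma> permutes S \<and> \<sigma> c = a}"
    using permutes_swap_id[OF assms] by (simp add: permutes_Diff_singleton_iff permutes_compose)
qed (simp_all add: comp_assoc)

lemma det_on_expand_column: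
  assumes "finite S" and "a \<in> S"
  shows "det_on S A = (\<Sum>c\<in>S. \<Sum>\<tau> | \<tau> permutes S - {a}.
           of_int (sign (\<tau> \<circ> transpose a c)) * (\<Prod>i\<in>S. A i ((\<tau> \<circ> transpose a c) i)))"
proof -
  let ?w = "\<lambda>\<sigma>. of_int (sign \<sigma>) * (\<Prod>i\<in>S. A i (\<sigma> i))"
  have "?w \<sigma> = (\<Sum>c\<in>S. if \<sigma> c = a then ?w \<sigma> else 0)" if "\<sigma> permutes S" for \<sigma>
  proof -
    have "{c \<in> S. \<sigma> c = a} = {inv_into UNIV \<sigma> a}"
      using that assms(2) permutes_inv_eq[OF that] permutes_in_image[OF permutes_inv[OF that]]
      by auto
    then show ?thesis
      using assms(1) by (simp add: sum.inter_filter[symmetric])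
  qed
  then have "det_on S A = (\<Sum>\<sigma> | \<sigma> permutes S. \<Sum>c\<in>S. if \<sigma> c = a then ?w \<sigma> else 0)"
    unfolding det_on_def by (intro sum.cong) auto
  also have "\<dots> = (\<Sum>c\<in>S. \<Sum>\<sigma> | \<sigma> permutes S \<and> \<sigma> c = a. ?w \<sigma>)"
    using assms(1) by (subst sum.swap) (simp add: sum.inter_filter[symmetric] finite_permutations)
  also have "\<dots> = (\<Sum>c\<in>S. \<Sum>\<tau> | \<tau> permutes S - {a}. ?w (\<tau> \<circ> transpose a c))"
    using assms(2) by (intro sum.cong refl sum_permutes_mapsto_conv_transpose) auto
  finally show ?thesis .
qed

lemma det_mat_eq_det_on:
  fixes A :: "nat \<Rightarrow> nat \<Rightarrow> 'a::comm_ring_1"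
  shows "det (mat n n (\<lambda>(i, j). A i j)) = det_on {..<n} A"
  unfolding det_def'[OF mat_carrier] det_on_def atLeast0LessThan
proof (rule sum.cong[OF refl])
  fix p assume "p \<in> {p. p permutes {..<n}}"
  then have "p i < n" if "i < n" for i
    using permutes_in_image[of p "{..<n}" i] that by simp
  then have "(\<Prod>i<n. mat n n (\<lambda>(i, j). A i j) $$ (i, p i)) = (\<Prod>i<n. A i (p i))"
    by (intro prod.cong refl) simp
  then show "of_int (sign p) * (\<Prod>i<n. mat n n (\<lambda>(i, j). A i j) $$ (i, p i)) =
      of_int (sign p) * (\<Prod>i<n. A i (p i))"
    by simp
qed

lemma skew_cauchy_three_term:
  assumes "inj_on t {a, b, c}" and "distinct [a, b, c]"
  shows "skew_cauchy t a b * skew_cauchy t c a =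
           skew_cauchy t c b * (skew_cauchy t a b - skew_cauchy t a c)"
proof -
  have "t a - t b \<noteq> 0" "t a - t c \<noteq> 0" "t c - t b \<noteq> 0"
    using assms by (auto simp: inj_on_def)
  then show ?thesis
    using assms(2) by (simp add: skew_cauchy_def divide_simps) (auto simp: algebra_simps)
qed

lemma skew_cauchy_pair:
  assumes "a \<noteq> c" and "t a \<noteq> t c"
  shows "- (skew_cauchy t a c * skew_cauchy t c a) = 1 / (t a - t c)^2"
proof -
  have "t a - t c \<noteq> 0" "t c - t a \<noteq> 0"
    using assms by auto
  then show ?thesis
    using assms(1) by (simp add: skew_cauchy_def divide_simps) (simp add: algebra_simps power2_eq_square)
qed

lemma skew_cauchy_transposed_term:
  fixes t :: "'i \<Rightarrow> 'a::field"
  defines "C \<equiv> skew_cauchy t"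
  assumes S: "finite S" "inj_on t S" and a: "a \<in> S" and c: "c \<in> S - {a}"
    and \<tau>: "\<tau> permutes S - {a}"
  shows "of_int (sign (\<tau> \<circ> transpose a c)) * (\<Prod>i\<in>S. C i ((\<tau> \<circ> transpose a c) i)) =
           - (of_int (sign \<tau>) * (\<Prod>i\<in>S - {a}. C i (\<tau> i))) * (C a (\<tau> c) - C a c)
           + (if \<tau> c = c then 1 / (t a - t c)^2 * (of_int (sign \<tau>) * (\<Prod>i\<in>S - {a, c}. C i (\<tau> i)))
              else 0)"
proof -
  define R where "R = (\<Prod>i\<in>S - {a, c}. C i (\<tau> i))"
  have \<tau>a: "\<tau> a = a" and \<tau>c: "\<tau> c \<in> S - {a}"
    using permutes_not_in[OF \<tau>] permutes_in_image[OF \<tau>] c by auto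
  have remove_c: "(\<Prod>i\<in>S - {a}. f i) = f c * (\<Prod>i\<in>S - {a, c}. f i)" for f :: "'i \<Rightarrow> 'a"
    using S(1) c by (simp add: prod.remove[of "S - {a}" c] Diff_insert2[symmetric])
  have prod_S: "(\<Prod>i\<in>S. C i ((\<tau> \<circ> transpose a c) i)) = C a (\<tau> c) * C c a * R"
  proof -
    have "(\<Prod>i\<in>S - {a, c}. C i ((\<tau> \<circ> transpose a c) i)) = R"
      unfolding R_def by (intro prod.cong) auto
    then show ?thesis
      using S(1) a c \<tau>a by (simp add: prod.remove[OF S(1) a] remove_c)
  qed
  have prod_S_a: "(\<Prod>i\<in>S - {a}. C i (\<tau> i)) = C c (\<tau> c) * R"
    unfolding R_def by (rule remove_c)
  have sign: "sign (\<tau> \<circ> transpose a c) = - sign \<tau>"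
    using c \<tau> S(1) by (intro sign_comp_transpose) (auto intro: permutes_imp_permutation)
  show ?thesis
  proof (cases "\<tau> c = c")
    case True
    have pair: "- (C a c * C c a) = 1 / (t a - t c)^2"
      using c a S(2) unfolding C_def by (intro skew_cauchy_pair) (auto dest: inj_onD)
    show ?thesis
      unfolding prod_S sign True pair[symmetric] R_def[symmetric] by (simp add: algebra_simps)
  next
    case False
    have three: "C a (\<tau> c) * C c a = C c (\<tau> c) * (C a (\<tau> c) - C a c)"
      unfolding C_def using a c \<tau>c False
      by (intro skew_cauchy_three_term inj_on_subset[OF S(2)]) auto
    have "of_int (sign (\<tau> \<circ> transpose a c)) * (\<Prod>i\<in>S. C i ((\<tau> \<circ> transpose a c) i)) =
        - (of_int (sign \<tau>) * R) * (C a (\<tau> c) * C c a)"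
      unfolding prod_S sign by (simp add: algebra_simps)
    also have "\<dots> = - (of_int (sign \<tau>) * (C c (\<tau> c) * R)) * (C a (\<tau> c) - C a c)"
      unfolding three by (simp add: algebra_simps)
    finally show ?thesis
      using False unfolding prod_S_a by simp
  qed
qed

lemma det_on_skew_cauchy_rec:
  fixes t :: "'i \<Rightarrow> 'a::field"
  defines "C \<equiv> skew_cauchy t"
  assumes S: "finite S" "inj_on t S" and a: "a \<in> S"
  shows "det_on S C = (\<Sum>c\<in>S - {a}. 1 / (t a - t c)^2 * det_on (S - {a, c}) C)"
proof -
  let ?T = "{\<tau>. \<tau> permutes S - {a}}"
  let ?P = "\<lambda>\<tau>. of_int (sign \<tau>) * (\<Prod>i\<in>S - {a}. C i (\<tau> i))"
  let ?w = "\<lambda>\<sigma>. of_int (sign \<sigma>) * (\<Prod>i\<in>S. C i (\<sigma> i))"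
  let ?f = "\<lambda>c \<tau>. 1 / (t a - t c)^2 * (of_int (sign \<tau>) * (\<Prod>i\<in>S - {a, c}. C i (\<tau> i)))"
  have fin_T: "finite ?T"
    using S(1) by (simp add: finite_permutations)
  have diagonal_term: "(\<Sum>\<tau>\<in>?T. ?w (\<tau> \<circ> transpose a a)) = 0"
    by (intro sum.neutral) (auto simp: prod.remove[OF S(1) a] C_def skew_cauchy_def permutes_not_in)
  have vanishing: "(\<Sum>c\<in>S - {a}. \<Sum>\<tau>\<in>?T. - ?P \<tau> * (C a (\<tau> c) - C a c)) = 0"
  proof -
    have "(\<Sum>c\<in>S - {a}. C a (\<tau> c) - C a c) = 0" if "\<tau> \<in> ?T" for \<tau>
      using that sum.reindex_bij_betw[OF permutes_imp_bij, of \<tau> "S - {a}" "C a"]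
      by (simp add: sum_subtractf)
    then show ?thesis
      by (subst sum.swap) (auto intro!: sum.neutral simp: sum_negf sum_distrib_left[symmetric])
  qed
  have fixing_c: "{\<tau>. \<tau> permutes S - {a} \<and> \<tau> c = c} = {\<tau>. \<tau> permutes S - {a, c}}" for c
    using permutes_Diff_singleton_iff[of _ "S - {a}" c] by (simp add: Diff_insert2[of S a "{c}"])
  have "det_on S C = (\<Sum>c\<in>S - {a}. \<Sum>\<tau>\<in>?T. ?w (\<tau> \<circ> transpose a c))"
    unfolding det_on_expand_column[OF S(1) a] sum.remove[OF S(1) a] diagonal_term by simp
  also have "\<dots> = (\<Sum>c\<in>S - {a}. \<Sum>\<tau>\<in>?T.
      - ?P \<tau> * (C a (\<tau> c) - C a c) + (if \<tau> c = c then ?f c \<tau> else 0))"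
    unfolding C_def using S a by (intro sum.cong refl skew_cauchy_transposed_term) auto
  also have "\<dots> = (\<Sum>c\<in>S - {a}. \<Sum>\<tau>\<in>?T. if \<tau> c = c then ?f c \<tau> else 0)"
    unfolding sum.distrib vanishing by simp
  also have "\<dots> = (\<Sum>c\<in>S - {a}. \<Sum>\<tau> | \<tau> permutes S - {a, c}. ?f c \<tau>)"
    using fin_T by (simp add: sum.inter_filter[symmetric] fixing_c)
  also have "\<dots> = (\<Sum>c\<in>S - {a}. 1 / (t a - t c)^2 * det_on (S - {a, c}) C)"
    by (simp add: det_on_def sum_distrib_left)
  finally show ?thesis .
qed

definition matchings_on :: "'i set \<Rightarrow> ('i \<Rightarrow> 'i) set" where
  "matchings_on S = {\<pi>. \<pi> permutes S \<and> (\<forall>i\<in>S. \<pi> i \<noteq> i \<and> \<pi> (\<pi> i) = i)}"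

definition matched_pairs :: "'i::linorder set \<Rightarrow> ('i \<Rightarrow> 'i) \<Rightarrow> ('i \<times> 'i) set" where
  "matched_pairs S \<pi> = {(i, j). i < j \<and> i \<in> S \<and> j \<in> S \<and> \<pi> i = j}"

definition matching_weight :: "('i::linorder \<Rightarrow> 'a::field) \<Rightarrow> 'i set \<Rightarrow> ('i \<Rightarrow> 'i) \<Rightarrow> 'a" where
  "matching_weight t S \<pi> = (\<Prod>(i, j)\<in>matched_pairs S \<pi>. 1 / (t i - t j)^2)"

definition matching_sum :: "('i::linorder \<Rightarrow> 'a::field) \<Rightarrow> 'i set \<Rightarrow> 'a" where
  "matching_sum t S = (\<Sum>\<pi>\<in>matchings_on S. matching_weight t S \<pi>)"

lemma finite_matchings_on: "finite S \<Longrightarrow> finite (matchings_on S)"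
  unfolding matchings_on_def by (rule finite_subset[OF _ finite_permutations]) auto

lemma finite_matched_pairs: "finite S \<Longrightarrow> finite (matched_pairs S \<pi>)"
  unfolding matched_pairs_def by (rule finite_subset[of _ "S \<times> S"]) auto

lemma transpose_comp_in_matchings_on:
  assumes a: "a \<in> S" and c: "c \<in> S" "c \<noteq> a" and \<rho>: "\<rho> \<in> matchings_on (S - {a, c})"
  shows "transpose a c \<circ> \<rho> \<in> matchings_on S" and "transpose a c (\<rho> a) = c"
proof -
  have \<rho>_perm: "\<rho> permutes S - {a, c}" and \<rho>_inv: "\<forall>i\<in>S - {a, c}. \<rho> i \<noteq> i \<and> \<rho> (\<rho> i) = i"
    using \<rho> unfolding matchings_on_def by auto
  have fixed: "\<rho> a = a" "\<rho> c = c"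
    using permutes_not_in[OF \<rho>_perm] by auto
  have \<rho>_rest: "\<rho> i \<in> S - {a, c}" if "i \<in> S - {a, c}" for i
    using permutes_in_image[OF \<rho>_perm] that by simp
  have "\<rho> permutes S"
    using \<rho>_perm by (rule permutes_subset) blast
  then have "transpose a c \<circ> \<rho> permutes S"
    using a c by (intro permutes_compose permutes_swap_id)
  moreover have "\<forall>i\<in>S. (transpose a c \<circ> \<rho>) i \<noteq> i \<and> (transpose a c \<circ> \<rho>) ((transpose a c \<circ> \<rho>) i) = i"
  proof
    fix i assume "i \<in> S"
    then show "(transpose a c \<circ> \<rho>) i \<noteq> i \<and> (transpose a c \<circ> \<rho>) ((transpose a c \<circ> \<rho>) i) = i"
      using fixed \<rho>_inv \<rho>_rest[of i] c by (cases "i \<in> {a, c}") (auto simp: transpose_def)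
  qed
  ultimately show "transpose a c \<circ> \<rho> \<in> matchings_on S"
    unfolding matchings_on_def by simp
  show "transpose a c (\<rho> a) = c"
    using fixed by simp
qed

lemma transpose_comp_in_matchings_on_Diff:
  assumes a: "a \<in> S" and c: "c \<in> S" "c \<noteq> a" and \<pi>: "\<pi> \<in> matchings_on S" and \<pi>a: "\<pi> a = c"
  shows "transpose a c \<circ> \<pi> \<in> matchings_on (S - {a, c})"
proof -
  have \<pi>_perm: "\<pi> permutes S" and \<pi>_inv: "\<And>i. i \<in> S \<Longrightarrow> \<pi> i \<noteq> i \<and> \<pi> (\<pi> i) = i"
    using \<pi> unfolding matchings_on_def by auto
  have \<pi>c: "\<pi> c = a"
    using \<pi>_inv[OF a] \<pi>a by simp
  have \<pi>_rest: "\<pi> i \<in> S - {a, c} \<and> \<pi> i \<noteq> i \<and> \<pi> (\<pi> i) = i" if "i \<in> S - {a, c}" for i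
    using that \<pi>_inv[of i] \<pi>a \<pi>c permutes_in_image[OF \<pi>_perm, of i] by auto
  have "transpose a c \<circ> \<pi> permutes S"
    using a c by (intro permutes_compose[OF \<pi>_perm] permutes_swap_id)
  then have "transpose a c \<circ> \<pi> permutes S - {a, c}"
    by (rule permutes_superset) (use \<pi>a \<pi>c in auto)
  moreover have "\<forall>i\<in>S - {a, c}. (transpose a c \<circ> \<pi>) i \<noteq> i \<and> (transpose a c \<circ> \<pi>) ((transpose a c \<circ> \<pi>) i) = i"
  proof
    fix i assume "i \<in> S - {a, c}"
    then show "(transpose a c \<circ> \<pi>) i \<noteq> i \<and> (transpose a c \<circ> \<pi>) ((transpose a c \<circ> \<pi>) i) = i"
      using \<pi>_rest[of i] by (auto simp: transpose_def)
  qed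
  ultimately show ?thesis
    unfolding matchings_on_def by simp
qed

lemma matched_pairs_transpose_comp:
  assumes a: "a \<in> S" and c: "c \<in> S" "c \<noteq> a" and \<rho>: "\<rho> permutes S - {a, c}"
  shows "matched_pairs S (transpose a c \<circ> \<rho>) = insert (min a c, max a c) (matched_pairs (S - {a, c}) \<rho>)"
proof -
  have fixed: "\<rho> a = a" "\<rho> c = c"
    using permutes_not_in[OF \<rho>] by auto
  have \<rho>_rest: "(transpose a c \<circ> \<rho>) i = \<rho> i \<and> \<rho> i \<in> S - {a, c}" if "i \<in> S - {a, c}" for i
    using permutes_in_image[OF \<rho>, of i] that by (auto simp: transpose_def)
  show ?thesis
  proof (intro Set.set_eqI iffI)
    fix p assume "p \<in> matched_pairs S (transpose a c \<circ> \<rho>)"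
    then obtain i j where p: "p = (i, j)" "i < j" "i \<in> S" "j \<in> S" "(transpose a c \<circ> \<rho>) i = j"
      unfolding matched_pairs_def by auto
    show "p \<in> insert (min a c, max a c) (matched_pairs (S - {a, c}) \<rho>)"
    proof (cases "i \<in> {a, c}")
      case True
      then show ?thesis
        using p fixed c by (auto simp: min_def max_def)
    next
      case False
      then show ?thesis
        using p \<rho>_rest[of i] unfolding matched_pairs_def by auto
    qed
  next
    fix p assume "p \<in> insert (min a c, max a c) (matched_pairs (S - {a, c}) \<rho>)"
    then show "p \<in> matched_pairs S (transpose a c \<circ> \<rho>)"
      using a c fixed \<rho>_rest unfolding matched_pairs_def by (auto simp: min_def max_def)
  qed
qed

lemma matching_weight_transpose_comp:
  assumes "finite S" and a: "a \<in> S" and c: "c \<in> S" "c \<noteq> a" and \<rho>: "\<rho> permutes S - {a, c}"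
  shows "matching_weight t S (transpose a c \<circ> \<rho>) = 1 / (t a - t c)^2 * matching_weight t (S - {a, c}) \<rho>"
proof -
  have "finite (matched_pairs (S - {a, c}) \<rho>)"
    using \<open>finite S\<close> by (simp add: finite_matched_pairs)
  moreover have "(min a c, max a c) \<notin> matched_pairs (S - {a, c}) \<rho>"
    unfolding matched_pairs_def by (auto simp: min_def max_def)
  moreover have "1 / (t (min a c) - t (max a c))^2 = 1 / (t a - t c)^2"
    using power2_commute[of "t c" "t a"] by (cases "a \<le> c") (simp_all add: min_def max_def)
  ultimately show ?thesis
    unfolding matching_weight_def matched_pairs_transpose_comp[OF a c \<rho>] by (simp add: prod.insert)
qed

lemma sum_matchings_on_partner_conv_transpose:
  assumes a: "a \<in> S" and c: "c \<in> S" "c \<noteq> a"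
  shows "(\<Sum>\<pi> | \<pi> \<in> matchings_on S \<and> \<pi> a = c. g \<pi>) =
           (\<Sum>\<rho>\<in>matchings_on (S - {a, c}). g (transpose a c \<circ> \<rho>))"
  by (rule sum.reindex_bij_witness[where i = "\<lambda>\<rho>. transpose a c \<circ> \<rho>" and j = "\<lambda>\<pi>. transpose a c \<circ> \<pi>"])
    (use a c in \<open>auto simp: comp_assoc[symmetric] transpose_comp_in_matchings_on
       transpose_comp_in_matchings_on_Diff\<close>)

lemma matching_sum_rec:
  fixes t :: "'i::linorder \<Rightarrow> 'a::field"
  assumes "finite S" and a: "a \<in> S"
  shows "matching_sum t S = (\<Sum>c\<in>S - {a}. 1 / (t a - t c)^2 * matching_sum t (S - {a, c}))"
proof -
  have partner: "\<pi> a \<in> S - {a}" if "\<pi> \<in> matchings_on S" for \<pi>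
    using that a permutes_in_image unfolding matchings_on_def by fastforce
  have "matching_sum t S = (\<Sum>c\<in>S - {a}. \<Sum>\<pi> | \<pi> \<in> matchings_on S \<and> \<pi> a = c. matching_weight t S \<pi>)"
    unfolding matching_sum_def using assms(1) partner
    by (subst sum.group[symmetric, of "matchings_on S" "S - {a}" "\<lambda>\<pi>. \<pi> a"])
       (auto simp: finite_matchings_on)
  also have "\<dots> = (\<Sum>c\<in>S - {a}. \<Sum>\<rho>\<in>matchings_on (S - {a, c}). matching_weight t S (transpose a c \<circ> \<rho>))"
    using a by (intro sum.cong refl sum_matchings_on_partner_conv_transpose) auto
  also have "\<dots> = (\<Sum>c\<in>S - {a}. 1 / (t a - t c)^2 * matching_sum t (S - {a, c}))"
    unfolding matching_sum_def sum_distrib_left using assms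
    by (intro sum.cong refl matching_weight_transpose_comp) (auto simp: matchings_on_def)
  finally show ?thesis .
qed

lemma det_on_skew_cauchy_eq_matching_sum:
  fixes t :: "'i::linorder \<Rightarrow> 'a::field"
  assumes "finite S" and "inj_on t S"
  shows "det_on S (skew_cauchy t) = matching_sum t S"
  using assms
proof (induction "card S" arbitrary: S rule: less_induct)
  case less
  show ?case
  proof (cases "S = {}")
    case True
    have "matchings_on ({} :: 'i set) = {id}" and "matched_pairs ({} :: 'i set) id = {}"
      unfolding matchings_on_def matched_pairs_def by auto
    then show ?thesis
      using True by (simp add: det_on_def matching_sum_def matching_weight_def)
  next
    case False
    then obtain a where a: "a \<in> S" by blast
    have "det_on (S - {a, c}) (skew_cauchy t) = matching_sum t (S - {a, c})" if "c \<in> S - {a}" for c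
      using less.prems a by (intro less.hyps psubset_card_mono) (auto intro: inj_on_subset)
    then show ?thesis
      unfolding det_on_skew_cauchy_rec[OF less.prems a] matching_sum_rec[OF less.prems(1) a]
      by simp
  qed
qed

theorem mainTheorem19:
  fixes t :: "nat \<Rightarrow> 'a::field" and n :: nat
  assumes "inj_on t {..<n}"
  shows "det (cauchy_like_mat n t) =
    (\<Sum>\<pi>\<in>perfect_matchings n. \<Prod>(i, j)\<in>{(i, j). i < j \<and> j < n \<and> \<pi> i = j}. 1 / (t i - t j)^2)"
proof -
  have "cauchy_like_mat n t = mat n n (\<lambda>(i, j). skew_cauchy t i j)"
    unfolding cauchy_like_mat_def skew_cauchy_def ..
  then have "det (cauchy_like_mat n t) = matching_sum t {..<n}"
    using assms by (simp add: det_mat_eq_det_on det_on_skew_cauchy_eq_matching_sum)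
  moreover have "matchings_on {..<n} = perfect_matchings n"
    unfolding matchings_on_def perfect_matchings_def by auto
  moreover have "matched_pairs {..<n} \<pi> = {(i, j). i < j \<and> j < n \<and> \<pi> i = j}" for \<pi>
    unfolding matched_pairs_def by auto
  ultimately show ?thesis
    unfolding matching_sum_def matching_weight_def by simp
qed

end
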